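(* Let $G$ be a connected graph. Then: (i) $\mu_t(G)=n(G)$ if and only if $G$ is a complete graph; (ii) $\mu_t(G)=n(G)-1$ if and only if $G$ is a non-complete graph with domination number $\gamma(G)=1$ (i.e., $G$ is non-complete and has a vertex adjacent to all other vertices).
   Context: All graphs are finite, simple and undirected; $n(G)$ denotes the order of $G$ and $\gamma(G)$ its domination number. Let $G$ be a connected graph and $X\subseteq V(G)$. Two vertices $x,y\in V(G)$ are $X$-visible if there exists a shortest $x,y$-path in $G$ none of whose internal vertices (i.e., vertices other than $x$ and $y$) belongs to $X$. The set $X$ is a total mutual-visibility set of $G$ if every two vertices of $G$ are $X$-visible (the empty set is allowed). The total mutual-visibility number $\mu_t(G)$ is the maximum cardinality of a total mutual-visibility set of $G$. *)

theory Defs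
  imports Main
begin

definition simple_graph :: "'a set \<Rightarrow> ('a \<Rightarrow> 'a \<Rightarrow> bool) \<Rightarrow> bool" where
  "simple_graph V E \<longleftrightarrow> finite V \<and> (\<forall>x y. E x y \<longrightarrow> x \<in> V \<and> y \<in> V)
     \<and> (\<forall>x y. E x y \<longrightarrow> E y x) \<and> (\<forall>x. \<not> E x x)"

definition is_walk :: "('a \<Rightarrow> 'a \<Rightarrow> bool) \<Rightarrow> 'a list \<Rightarrow> bool" where
  "is_walk E p \<longleftrightarrow> p \<noteq> [] \<and> (\<forall>i. Suc i < length p \<longrightarrow> E (p ! i) (p ! Suc i))"

definition walk_between :: "('a \<Rightarrow> 'a \<Rightarrow> bool) \<Rightarrow> 'a \<Rightarrow> 'a \<Rightarrow> 'a list \<Rightarrow> bool" where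
  "walk_between E x y p \<longleftrightarrow> is_walk E p \<and> hd p = x \<and> last p = y"

definition connected_graph :: "'a set \<Rightarrow> ('a \<Rightarrow> 'a \<Rightarrow> bool) \<Rightarrow> bool" where
  "connected_graph V E \<longleftrightarrow> V \<noteq> {} \<and> (\<forall>x\<in>V. \<forall>y\<in>V. \<exists>p. walk_between E x y p)"

definition gdist :: "('a \<Rightarrow> 'a \<Rightarrow> bool) \<Rightarrow> 'a \<Rightarrow> 'a \<Rightarrow> nat" where
  "gdist E x y = (LEAST n. \<exists>p. walk_between E x y p \<and> length p = Suc n)"

definition shortest_path :: "('a \<Rightarrow> 'a \<Rightarrow> bool) \<Rightarrow> 'a \<Rightarrow> 'a \<Rightarrow> 'a list \<Rightarrow> bool" where
  "shortest_path E x y p \<longleftrightarrow> walk_between E x y p \<and> length p = Suc (gdist E x y)"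

definition internal :: "'a list \<Rightarrow> 'a set" where
  "internal p = set (butlast (tl p))"

definition X_visible :: "('a \<Rightarrow> 'a \<Rightarrow> bool) \<Rightarrow> 'a set \<Rightarrow> 'a \<Rightarrow> 'a \<Rightarrow> bool" where
  "X_visible E X x y \<longleftrightarrow> (\<exists>p. shortest_path E x y p \<and> internal p \<inter> X = {})"

definition total_mv_set :: "'a set \<Rightarrow> ('a \<Rightarrow> 'a \<Rightarrow> bool) \<Rightarrow> 'a set \<Rightarrow> bool" where
  "total_mv_set V E X \<longleftrightarrow> X \<subseteq> V \<and> (\<forall>x\<in>V. \<forall>y\<in>V. X_visible E X x y)"

definition mu_t :: "'a set \<Rightarrow> ('a \<Rightarrow> 'a \<Rightarrow> bool) \<Rightarrow> nat" where
  "mu_t V E = Max {card X | X. total_mv_set V E X}"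

definition complete_graph :: "'a set \<Rightarrow> ('a \<Rightarrow> 'a \<Rightarrow> bool) \<Rightarrow> bool" where
  "complete_graph V E \<longleftrightarrow> (\<forall>x\<in>V. \<forall>y\<in>V. x \<noteq> y \<longrightarrow> E x y)"

definition dominating_set :: "'a set \<Rightarrow> ('a \<Rightarrow> 'a \<Rightarrow> bool) \<Rightarrow> 'a set \<Rightarrow> bool" where
  "dominating_set V E D \<longleftrightarrow> D \<subseteq> V \<and> (\<forall>v\<in>V. v \<in> D \<or> (\<exists>u\<in>D. E u v))"

definition domination_number :: "'a set \<Rightarrow> ('a \<Rightarrow> 'a \<Rightarrow> bool) \<Rightarrow> nat" where
  "domination_number V E = Min {card D | D. dominating_set V E D}"

end

theory Submission
  imports Defs
begin

text \<open>A shortest path between distinct non-adjacent vertices has an internal vertex adjacent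
  to its start. Hence if X is a total mutual-visibility set, every vertex u with a non-neighbour
  has a neighbour outside X. For X = V this forces completeness; for X = V - {v} it forces v to
  be adjacent to all other vertices. Conversely V is visible in a complete graph, and V - {v}
  is visible when v is a dominating vertex, because every non-adjacent pair is then joined by
  the shortest path through v.\<close>

definition dominating_vertex :: "'a set \<Rightarrow> ('a \<Rightarrow> 'a \<Rightarrow> bool) \<Rightarrow> 'a \<Rightarrow> bool" where
  "dominating_vertex V E v \<longleftrightarrow> v \<in> V \<and> (\<forall>w\<in>V. w \<noteq> v \<longrightarrow> E v w)"

lemma shortest_path_exists:
  assumes "connected_graph V E" "x \<in> V" "y \<in> V"
  shows "\<exists>p. shortest_path E x y p"
proof -
  obtain p where p: "walk_between E x y p"
    using assms unfolding connected_graph_def by blast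
  then have "p \<noteq> []" unfolding walk_between_def is_walk_def by auto
  with p have "\<exists>n p. walk_between E x y p \<and> length p = Suc n"
    by (metis Suc_pred length_greater_0_conv)
  from LeastI_ex[OF this] show ?thesis
    unfolding shortest_path_def gdist_def by blast
qed

lemma shortest_pathI:
  assumes "walk_between E x y p" "length p = Suc n"
    and "\<And>q. walk_between E x y q \<Longrightarrow> Suc n \<le> length q"
  shows "shortest_path E x y p"
proof -
  have "gdist E x y = n" unfolding gdist_def
  proof (rule Least_equality)
    show "\<exists>p. walk_between E x y p \<and> length p = Suc n" using assms by blast
  next
    fix m assume "\<exists>p. walk_between E x y p \<and> length p = Suc m"
    then show "n \<le> m" using assms(3) by force
  qed
  then show ?thesis using assms unfolding shortest_path_def by simp
qed

lemma walk_length_ge_2: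
  assumes "walk_between E x y q" "x \<noteq> y"
  shows "2 \<le> length q"
proof (rule ccontr)
  assume "\<not> ?thesis"
  moreover have "q \<noteq> []" using assms(1) unfolding walk_between_def is_walk_def by simp
  ultimately obtain a where "q = [a]" by (cases q) (auto simp: Suc_le_eq)
  then show False using assms unfolding walk_between_def by auto
qed

lemma walk_length_ge_3:
  assumes "walk_between E x y q" "x \<noteq> y" "\<not> E x y"
  shows "3 \<le> length q"
proof (rule ccontr)
  assume "\<not> ?thesis"
  with walk_length_ge_2[OF assms(1,2)] have "length q = 2" by simp
  then obtain a b where q: "q = [a, b]"
    by (metis One_nat_def Suc_1 length_0_conv length_Suc_conv)
  then have "E a b" using assms(1) unfolding walk_between_def is_walk_def by force
  then show False using assms q unfolding walk_between_def by simp
qed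

lemma walk_second_vertex_internal:
  assumes "simple_graph V E" "walk_between E x y p" "x \<noteq> y" "\<not> E x y"
  shows "p ! 1 \<in> internal p" "p ! 1 \<in> V" "E x (p ! 1)"
proof -
  have len: "3 \<le> length p" using walk_length_ge_3[OF assms(2-4)] .
  then have "p ! 0 = x" using assms(2) unfolding walk_between_def
    by (metis hd_conv_nth list.size(3) not_numeral_le_zero)
  moreover have "E (p ! 0) (p ! 1)"
    using assms(2) len unfolding walk_between_def is_walk_def by force
  ultimately show "E x (p ! 1)" by simp
  then show "p ! 1 \<in> V" using assms(1) unfolding simple_graph_def by blast
  have "butlast (tl p) ! 0 = p ! 1" using len by (simp add: nth_butlast nth_tl)
  moreover have "0 < length (butlast (tl p))" using len by simp
  ultimately show "p ! 1 \<in> internal p" unfolding internal_def by (metis nth_mem)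
qed

lemma X_visible_nonadjacent_neighbour:
  assumes "simple_graph V E" "X_visible E X x y" "x \<noteq> y" "\<not> E x y"
  shows "\<exists>z\<in>V - X. E x z"
proof -
  obtain p where p: "shortest_path E x y p" "internal p \<inter> X = {}"
    using assms(2) unfolding X_visible_def by blast
  then have "walk_between E x y p" unfolding shortest_path_def by simp
  from walk_second_vertex_internal[OF assms(1) this assms(3,4)] p(2) show ?thesis by blast
qed

lemma X_visible_eq_or_adjacent:
  assumes "x = y \<or> E x y"
  shows "X_visible E X x y"
proof (cases "x = y")
  case True
  have "shortest_path E x x [x]"
    by (rule shortest_pathI[where n = 0]) (auto simp: walk_between_def is_walk_def Suc_le_eq)
  with True show ?thesis unfolding X_visible_def internal_def by force
next
  case False
  with assms have "E x y" by simp
  have "shortest_path E x y [x, y]"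
  proof (rule shortest_pathI[where n = 1])
    show "walk_between E x y [x, y]"
      using \<open>E x y\<close> by (auto simp: walk_between_def is_walk_def less_Suc_eq)
  next
    fix q assume "walk_between E x y q"
    from walk_length_ge_2[OF this False] show "Suc 1 \<le> length q" by simp
  qed simp
  then show ?thesis unfolding X_visible_def internal_def by force
qed

lemma X_visible_common_neighbour:
  assumes "E x v" "E v y" "x \<noteq> y" "\<not> E x y" "v \<notin> X"
  shows "X_visible E X x y"
proof -
  have "shortest_path E x y [x, v, y]"
  proof (rule shortest_pathI[where n = 2])
    show "walk_between E x y [x, v, y]"
      using assms(1,2) unfolding walk_between_def is_walk_def
      by (auto simp: less_Suc_eq nth_Cons split: nat.splits)
  next
    fix q assume "walk_between E x y q"
    from walk_length_ge_3[OF this assms(3,4)] show "Suc 2 \<le> length q" by simp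
  qed simp
  with assms(5) show ?thesis unfolding X_visible_def internal_def by auto
qed

lemma total_mv_set_all_iff_complete:
  assumes "simple_graph V E"
  shows "total_mv_set V E V \<longleftrightarrow> complete_graph V E"
proof
  assume "total_mv_set V E V"
  then show "complete_graph V E" unfolding complete_graph_def total_mv_set_def
    using X_visible_nonadjacent_neighbour[OF assms] by blast
next
  assume "complete_graph V E"
  then show "total_mv_set V E V" unfolding complete_graph_def total_mv_set_def
    by (auto intro: X_visible_eq_or_adjacent)
qed

lemma total_mv_set_remove_iff_dominating:
  assumes "simple_graph V E" "v \<in> V"
  shows "total_mv_set V E (V - {v}) \<longleftrightarrow> dominating_vertex V E v"
proof
  assume mv: "total_mv_set V E (V - {v})"
  have "E v w" if "w \<in> V" "w \<noteq> v" for w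
  proof (rule ccontr)
    assume "\<not> E v w"
    with mv that assms(2) obtain z where "z \<in> V - (V - {v})" "E v z"
      using X_visible_nonadjacent_neighbour[OF assms(1)] unfolding total_mv_set_def by metis
    then show False using assms(1) unfolding simple_graph_def by auto
  qed
  with assms(2) show "dominating_vertex V E v" unfolding dominating_vertex_def by blast
next
  assume dom: "dominating_vertex V E v"
  have sym: "E y x" if "E x y" for x y using assms(1) that unfolding simple_graph_def by blast
  have "X_visible E (V - {v}) x y" if "x \<in> V" "y \<in> V" for x y
  proof (cases "x = y \<or> E x y")
    case True
    then show ?thesis by (rule X_visible_eq_or_adjacent)
  next
    case False
    have "x \<noteq> v" using False dom that(2) unfolding dominating_vertex_def by auto
    moreover have "y \<noteq> v" using False dom that(1) sym unfolding dominating_vertex_def by metis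
    ultimately have "E x v" "E v y" using dom that sym unfolding dominating_vertex_def by auto
    with False show ?thesis by (intro X_visible_common_neighbour) auto
  qed
  then show "total_mv_set V E (V - {v})" unfolding total_mv_set_def by blast
qed

lemma finite_card_total_mv_sets:
  assumes "finite V"
  shows "finite {card X | X. total_mv_set V E X}"
proof -
  have "{card X | X. total_mv_set V E X} \<subseteq> card ` Pow V" unfolding total_mv_set_def by auto
  with assms show ?thesis by (meson finite_Pow_iff finite_imageI finite_subset)
qed

lemma card_le_mu_t:
  assumes "finite V" "total_mv_set V E X"
  shows "card X \<le> mu_t V E"
  unfolding mu_t_def using assms finite_card_total_mv_sets by (auto intro: Max_ge)

lemma mu_t_attained:
  assumes "connected_graph V E" "finite V"
  obtains X where "total_mv_set V E X" "card X = mu_t V E"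
proof -
  have "total_mv_set V E {}" unfolding total_mv_set_def X_visible_def
    using shortest_path_exists[OF assms(1)] by simp
  then have "{card X | X. total_mv_set V E X} \<noteq> {}" by blast
  from Max_in[OF finite_card_total_mv_sets[OF assms(2)] this] that show ?thesis
    unfolding mu_t_def by force
qed

lemma mu_t_eq_card_iff:
  assumes "connected_graph V E" "finite V"
  shows "mu_t V E = card V \<longleftrightarrow> total_mv_set V E V"
proof
  assume "mu_t V E = card V"
  with mu_t_attained[OF assms] obtain X where "total_mv_set V E X" "card X = card V"
    by metis
  moreover then have "X = V" using assms(2) unfolding total_mv_set_def
    by (metis card_subset_eq)
  ultimately show "total_mv_set V E V" by simp
next
  assume "total_mv_set V E V"
  moreover obtain X where "total_mv_set V E X" "card X = mu_t V E"
    using mu_t_attained[OF assms] .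
  ultimately show "mu_t V E = card V"
    using card_le_mu_t[OF assms(2)] card_mono[OF assms(2)]
    unfolding total_mv_set_def by (metis le_antisym)
qed

lemma mu_t_eq_card_minus_1_iff:
  assumes "connected_graph V E" "finite V"
  shows "mu_t V E = card V - 1 \<longleftrightarrow>
    \<not> total_mv_set V E V \<and> (\<exists>v\<in>V. total_mv_set V E (V - {v}))"
proof -
  have pos: "0 < card V" using assms unfolding connected_graph_def by (simp add: card_gt_0_iff)
  obtain X where X: "total_mv_set V E X" "card X = mu_t V E"
    using mu_t_attained[OF assms] .
  have XV: "X \<subseteq> V" using X(1) unfolding total_mv_set_def by simp
  show ?thesis
  proof
    assume mu: "mu_t V E = card V - 1"
    then have "card (V - X) = 1"
      using X(2) XV assms(2) pos by (simp add: card_Diff_subset finite_subset)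
    then obtain v where "V - X = {v}" by (metis card_1_singletonE)
    with XV have "v \<in> V" "X = V - {v}" by auto
    with X(1) mu pos mu_t_eq_card_iff[OF assms] show
      "\<not> total_mv_set V E V \<and> (\<exists>v\<in>V. total_mv_set V E (V - {v}))" by auto
  next
    assume "\<not> total_mv_set V E V \<and> (\<exists>v\<in>V. total_mv_set V E (V - {v}))"
    then obtain v where "\<not> total_mv_set V E V" "v \<in> V" "total_mv_set V E (V - {v})" by blast
    then have "card V - 1 \<le> mu_t V E" "mu_t V E \<noteq> card V"
      using card_le_mu_t[OF assms(2), of E "V - {v}"] mu_t_eq_card_iff[OF assms]
      by (auto simp: card_Diff_singleton)
    moreover have "mu_t V E \<le> card V"
      using X XV card_mono[OF assms(2)] by metis
    ultimately show "mu_t V E = card V - 1" by linarith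
  qed
qed

lemma domination_number_eq_1_iff:
  assumes "finite V" "V \<noteq> {}"
  shows "domination_number V E = 1 \<longleftrightarrow> (\<exists>v. dominating_vertex V E v)"
proof -
  let ?S = "{card D | D. dominating_set V E D}"
  have "?S \<subseteq> card ` Pow V" unfolding dominating_set_def by auto
  then have fin: "finite ?S" using assms(1) by (meson finite_Pow_iff finite_imageI finite_subset)
  have "card V \<in> ?S" unfolding dominating_set_def by auto
  then have ne: "?S \<noteq> {}" by blast
  have pos: "1 \<le> k" if "k \<in> ?S" for k
  proof -
    obtain D where D: "dominating_set V E D" "k = card D" using \<open>k \<in> ?S\<close> by blast
    have "finite D" using D(1) assms(1) unfolding dominating_set_def by (meson finite_subset)
    moreover have "D \<noteq> {}" using D(1) assms(2) unfolding dominating_set_def by blast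
    ultimately show ?thesis using D(2) by (simp add: Suc_leI card_gt_0_iff)
  qed
  have "domination_number V E = 1 \<longleftrightarrow> 1 \<in> ?S"
  proof
    assume "domination_number V E = 1"
    then show "1 \<in> ?S" using Min_in[OF fin ne] unfolding domination_number_def by simp
  next
    assume "1 \<in> ?S"
    then show "domination_number V E = 1" unfolding domination_number_def
      using Min_le[OF fin] pos[OF Min_in[OF fin ne]] by (meson le_antisym)
  qed
  also have "\<dots> \<longleftrightarrow> (\<exists>v. dominating_set V E {v})"
  proof
    assume "1 \<in> ?S"
    then obtain D where "dominating_set V E D" "card D = 1" by auto
    then show "\<exists>v. dominating_set V E {v}" by (metis card_1_singletonE)
  qed force
  also have "\<dots> \<longleftrightarrow> (\<exists>v. dominating_vertex V E v)"
    unfolding dominating_set_def dominating_vertex_def by auto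
  finally show ?thesis .
qed

theorem corollary2p3:
  fixes V :: "'a set" and E :: "'a \<Rightarrow> 'a \<Rightarrow> bool"
  assumes "simple_graph V E" and "connected_graph V E"
  shows "(mu_t V E = card V \<longleftrightarrow> complete_graph V E)
       \<and> (mu_t V E = card V - 1 \<longleftrightarrow> \<not> complete_graph V E \<and> domination_number V E = 1)"
proof -
  have fin: "finite V" using assms(1) unfolding simple_graph_def by simp
  have ne: "V \<noteq> {}" using assms(2) unfolding connected_graph_def by simp
  have "(\<exists>v\<in>V. total_mv_set V E (V - {v})) \<longleftrightarrow> (\<exists>v. dominating_vertex V E v)"
    using total_mv_set_remove_iff_dominating[OF assms(1)] unfolding dominating_vertex_def
    by blast
  then show ?thesis
    using mu_t_eq_card_iff[OF assms(2) fin] mu_t_eq_card_minus_1_iff[OF assms(2) fin]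
      total_mv_set_all_iff_complete[OF assms(1)] domination_number_eq_1_iff[OF fin ne]
    by simp
qed

end
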